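(* Let $\xi=(\tau_L,\delta_L,\tau_R,\delta_R)\in\Phi$. If $\lambda_L^s+|\lambda_R^s|<1$ then $U_2>V_2$, where $U=(U_1,U_2)$ and $V=(V_1,V_2)$ are the points defined below.
   Context: For $\xi=(\tau_L,\delta_L,\tau_R,\delta_R)\in\mathbb{R}^4$ define $f_\xi:\mathbb{R}^2\to\mathbb{R}^2$ by $f_\xi(x,y)=(\tau_L x+y+1,\,-\delta_L x)$ if $x\le 0$ and $f_\xi(x,y)=(\tau_R x+y+1,\,-\delta_R x)$ if $x\ge 0$. Let $\Phi=\{\xi\in\mathbb{R}^4: \tau_L>\delta_L+1,\ \delta_L>0,\ \tau_R<-(\delta_R+1),\ \delta_R>0\}$. For $\xi\in\Phi$, the matrix $\begin{bmatrix}\tau_L&1\\-\delta_L&0\end{bmatrix}$ has real eigenvalues $0<\lambda_L^s<1<\lambda_L^u$ and $\begin{bmatrix}\tau_R&1\\-\delta_R&0\end{bmatrix}$ has real eigenvalues $\lambda_R^u<-1<\lambda_R^s<0$. Let $D=\left(\frac{1}{1-\lambda_L^s},0\right)$; for $\xi\in\Phi$, $D$ lies in $x>0$ and $f_\xi(D)$ lies in $x<0$. Let $U$ be the point where the line segment from $D$ to $f_\xi(D)$ meets the $y$-axis, and let $V=\left(0,\frac{-\lambda_R^u}{\lambda_R^u-1}\right)$. *)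

theory Defs
  imports "HOL-Analysis.Analysis"
begin

definition bcnf :: "real \<times> real \<times> real \<times> real \<Rightarrow> real \<times> real \<Rightarrow> real \<times> real" where
  "bcnf xi p = (case xi of (tL, dL, tR, dR) \<Rightarrow> case p of (x, y) \<Rightarrow>
     (if x \<le> 0 then (tL * x + y + 1, - dL * x) else (tR * x + y + 1, - dR * x)))"

definition Phi :: "(real \<times> real \<times> real \<times> real) set" where
  "Phi = {(tL, dL, tR, dR). tL > dL + 1 \<and> dL > 0 \<and> tR < - (dR + 1) \<and> dR > 0}"

text \<open>Characteristic polynomial of the matrix [[tau, 1], [-delta, 0]]:
  det(lambda I - A) = lambda^2 - tau lambda + delta.\<close>
definition is_eig :: "real \<Rightarrow> real \<Rightarrow> real \<Rightarrow> bool" where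
  "is_eig tau delta lam \<longleftrightarrow> lam^2 - tau * lam + delta = 0"

definition lamLs :: "real \<times> real \<times> real \<times> real \<Rightarrow> real" where
  "lamLs xi = (case xi of (tL, dL, tR, dR) \<Rightarrow> THE l. is_eig tL dL l \<and> 0 < l \<and> l < 1)"

definition lamRs :: "real \<times> real \<times> real \<times> real \<Rightarrow> real" where
  "lamRs xi = (case xi of (tL, dL, tR, dR) \<Rightarrow> THE l. is_eig tR dR l \<and> -1 < l \<and> l < 0)"

definition lamRu :: "real \<times> real \<times> real \<times> real \<Rightarrow> real" where
  "lamRu xi = (case xi of (tL, dL, tR, dR) \<Rightarrow> THE l. is_eig tR dR l \<and> l < -1)"

definition ptD :: "real \<times> real \<times> real \<times> real \<Rightarrow> real \<times> real" where
  "ptD xi = (1 / (1 - lamLs xi), 0)"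

definition ptU :: "real \<times> real \<times> real \<times> real \<Rightarrow> real \<times> real" where
  "ptU xi = (THE p. p \<in> closed_segment (ptD xi) (bcnf xi (ptD xi)) \<and> fst p = 0)"

definition ptV :: "real \<times> real \<times> real \<times> real \<Rightarrow> real \<times> real" where
  "ptV xi = (0, - lamRu xi / (lamRu xi - 1))"

end

theory Submission
  imports Defs
begin

text \<open>The eigenvalues are the two roots \<open>l\<close> and \<open>tau - l\<close> of \<open>x^2 - tau x + delta\<close>; a sign
  change of this quadratic on an interval isolates exactly one of them, which identifies
  \<open>lamLs\<close>, \<open>lamRs\<close> and gives \<open>lamRu = tauR - lamRs\<close>, \<open>deltaR = lamRs * lamRu\<close>. Writing
  \<open>a = lamLs\<close>, \<open>s = lamRs\<close>, \<open>u = lamRu\<close>, the segment from \<open>D\<close> to \<open>f D\<close> meets the \<open>y\<close>-axis at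
  height \<open>U2 = -s u / ((1 - a) (a - s - u))\<close>, while \<open>V2 = -u / (u - 1)\<close>. Clearing the
  (positive) denominators, \<open>U2 - V2\<close> has the sign of \<open>-u (a - u) (1 - a + s)\<close>, which is
  positive exactly because \<open>a + |s| < 1\<close>.\<close>

lemma is_eig_factor:
  assumes "is_eig tau delta l"
  shows "x^2 - tau * x + delta = (x - l) * (x - (tau - l))"
  using assms unfolding is_eig_def by (simp add: algebra_simps power2_eq_square)

lemma is_eig_iff_root:
  assumes "is_eig tau delta l"
  shows "is_eig tau delta x \<longleftrightarrow> x = l \<or> x = tau - l"
  using is_eig_factor[OF assms, of x] unfolding is_eig_def by auto

lemma ex1_eig_between:
  fixes tau delta a b :: real
  assumes "a < b"
    and sign_change: "(a^2 - tau * a + delta) * (b^2 - tau * b + delta) < 0"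
  shows "\<exists>!l. is_eig tau delta l \<and> a < l \<and> l < b"
proof -
  define p where "p x = x^2 - tau * x + delta" for x
  have cont: "continuous_on {a..b} p"
    unfolding p_def by (intro continuous_intros)
  have "\<exists>l. a \<le> l \<and> l \<le> b \<and> p l = 0"
  proof (cases "p a < 0")
    case True
    then have "0 < p b"
      using sign_change unfolding p_def by (simp add: mult_less_0_iff)
    then show ?thesis
      using IVT'[of p a 0 b] True cont \<open>a < b\<close> by auto
  next
    case False
    then have "p b < 0"
      using sign_change unfolding p_def by (simp add: mult_less_0_iff)
    then show ?thesis
      using IVT2'[of p b 0 a] False cont \<open>a < b\<close> by auto
  qed
  then obtain l where l: "a \<le> l" "l \<le> b" "is_eig tau delta l"
    unfolding p_def is_eig_def by auto
  have factor: "x^2 - tau * x + delta = (x - l) * (x - (tau - l))" for x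
    using is_eig_factor[OF l(3)] .
  have "a \<noteq> l" "l \<noteq> b"
    using sign_change factor[of a] factor[of b] by auto
  with l have l_between: "a < l" "l < b"
    by auto
  have other_outside: "\<not> (a < tau - l \<and> tau - l < b)"
    \<comment> \<open>otherwise the quadratic would be positive at both ends\<close>
  proof
    assume "a < tau - l \<and> tau - l < b"
    then have "(a - (tau - l)) * (b - (tau - l)) < 0"
      by (simp add: mult_neg_pos)
    with l_between have "0 < ((a - l) * (b - l)) * ((a - (tau - l)) * (b - (tau - l)))"
      by (simp add: mult_neg_neg mult_neg_pos)
    then show False
      using sign_change factor[of a] factor[of b] by (simp add: ac_simps)
  qed
  show ?thesis
  proof (rule ex1I)
    show "is_eig tau delta l \<and> a < l \<and> l < b"
      using l(3) l_between by simp
    show "x = l" if "is_eig tau delta x \<and> a < x \<and> x < b" for x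
      using that other_outside is_eig_iff_root[OF l(3)] by auto
  qed
qed

lemma lamLs_Phi:
  assumes "(tL, dL, tR, dR) \<in> Phi"
  shows "is_eig tL dL (lamLs (tL, dL, tR, dR)) \<and> 0 < lamLs (tL, dL, tR, dR)
    \<and> lamLs (tL, dL, tR, dR) < 1"
proof -
  have "\<exists>!l. is_eig tL dL l \<and> 0 < l \<and> l < 1"
    using assms by (intro ex1_eig_between) (auto simp: Phi_def mult_pos_neg)
  then show ?thesis
    using theI' unfolding lamLs_def by simp
qed

lemma lamRs_Phi:
  assumes "(tL, dL, tR, dR) \<in> Phi"
  shows "is_eig tR dR (lamRs (tL, dL, tR, dR)) \<and> -1 < lamRs (tL, dL, tR, dR)
    \<and> lamRs (tL, dL, tR, dR) < 0"
proof -
  have "\<exists>!l. is_eig tR dR l \<and> -1 < l \<and> l < 0"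
    using assms by (intro ex1_eig_between) (auto simp: Phi_def mult_neg_pos)
  then show ?thesis
    using theI' unfolding lamRs_def by simp
qed

lemma lamRu_Phi:
  assumes "(tL, dL, tR, dR) \<in> Phi"
  shows "lamRu (tL, dL, tR, dR) = tR - lamRs (tL, dL, tR, dR) \<and> lamRu (tL, dL, tR, dR) < -1"
proof -
  let ?s = "lamRs (tL, dL, tR, dR)"
  have s: "is_eig tR dR ?s" "-1 < ?s"
    using lamRs_Phi[OF assms] by auto
  have "(-1 - ?s) * (-1 - (tR - ?s)) < 0"
    using is_eig_factor[OF s(1), of "-1"] assms by (simp add: Phi_def)
  then have u: "tR - ?s < -1"
    using s(2) by (simp add: mult_less_0_iff)
  have "lamRu (tL, dL, tR, dR) = tR - ?s"
    unfolding lamRu_def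
  proof (simp, rule the_equality)
    show "is_eig tR dR (tR - ?s) \<and> tR - ?s < -1"
      using is_eig_iff_root[OF s(1)] u by simp
    show "l = tR - ?s" if "is_eig tR dR l \<and> l < -1" for l
      using that is_eig_iff_root[OF s(1)] s(2) by auto
  qed
  with u show ?thesis
    by simp
qed

lemma closed_segment_crosses_axis:
  fixes x1 y1 x2 y2 :: real
  assumes "x2 \<le> 0" "0 \<le> x1" "x2 < x1"
  shows "(THE p. p \<in> closed_segment (x1, y1) (x2, y2) \<and> fst p = 0)
    = (0, (x1 * y2 - x2 * y1) / (x1 - x2))"
proof (rule the_equality)
  define t where "t = x1 / (x1 - x2)"
  have ne: "x1 - x2 \<noteq> 0"
    using assms by simp
  have t: "0 \<le> t" "t \<le> 1" "(1 - t) * x1 + t * x2 = 0"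
    using assms unfolding t_def by (auto simp: field_simps)
  have "1 - t = - x2 / (x1 - x2)"
    using ne unfolding t_def by (simp add: field_simps)
  then have y_t: "(1 - t) * y1 + t * y2 = (x1 * y2 - x2 * y1) / (x1 - x2)"
    unfolding t_def by (simp add: add_divide_distrib diff_divide_distrib)
  with t show "(0, (x1 * y2 - x2 * y1) / (x1 - x2)) \<in> closed_segment (x1, y1) (x2, y2)
      \<and> fst (0::real, (x1 * y2 - x2 * y1) / (x1 - x2)) = 0"
    unfolding closed_segment_def by (auto intro!: exI[of _ t])
  fix p :: "real \<times> real"
  assume p: "p \<in> closed_segment (x1, y1) (x2, y2) \<and> fst p = 0"
  then obtain u where u: "p = (1 - u) *\<^sub>R (x1, y1) + u *\<^sub>R (x2, y2)"
    unfolding closed_segment_def by auto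
  with p have "(1 - u) * x1 + u * x2 = 0"
    by simp
  then have "u = t"
    using assms unfolding t_def by (simp add: field_simps)
  then show "p = (0, (x1 * y2 - x2 * y1) / (x1 - x2))"
    using u y_t t(3) by simp
qed

lemma snd_ptU:
  assumes "(tL, dL, tR, dR) \<in> Phi"
  shows "snd (ptU (tL, dL, tR, dR))
    = - dR / ((1 - lamLs (tL, dL, tR, dR)) * (lamLs (tL, dL, tR, dR) - tR))"
proof -
  define a where "a = lamLs (tL, dL, tR, dR)"
  define d where "d = 1 / (1 - a)"
  have a: "0 < a" "a < 1"
    using lamLs_Phi[OF assms] unfolding a_def by auto
  have d: "1 < d"
    using a unfolding d_def by (simp add: field_simps)
  have R: "tR < -1"
    using assms by (auto simp: Phi_def)
  have D: "ptD (tL, dL, tR, dR) = (d, 0)"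
    unfolding ptD_def d_def a_def ..
  have fD: "bcnf (tL, dL, tR, dR) (d, 0) = (tR * d + 1, - dR * d)"
    unfolding bcnf_def using d by simp
  have "tR * d < (-1) * d"
    using R d by (intro mult_strict_right_mono) auto
  then have "ptU (tL, dL, tR, dR) = (0, d * (- dR * d) / (d - (tR * d + 1)))"
    unfolding ptU_def D fD using d by (subst closed_segment_crosses_axis) auto
  also have "\<dots> = (0, - dR / ((1 - a) * (a - tR)))"
  proof -
    have ne: "1 - a \<noteq> 0" "a - tR \<noteq> 0"
      using a R by linarith+
    have "d - (tR * d + 1) = (a - tR) / (1 - a)"
      using ne unfolding d_def by (simp add: field_simps)
    moreover have "d * (- dR * d) = - dR / (1 - a)^2"
      unfolding d_def by (simp add: power2_eq_square)
    ultimately show ?thesis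
      using ne by (simp add: power2_eq_square)
  qed
  finally show ?thesis
    unfolding a_def by simp
qed

lemma eigenvalue_intercept_less:
  fixes a s u :: real
  assumes "0 \<le> a" "s < 0" "u < 0" "a - s < 1"
  shows "- u / (u - 1) < - (s * u) / ((1 - a) * (a - s - u))"
proof -
  define P where "P = (1 - a) * (a - s - u)"
  have pos: "0 < P" "0 < 1 - u"
    using assms unfolding P_def by (auto intro!: mult_pos_pos)
  have "0 < - u * (a - u) * (1 - a + s)"
    using assms by (intro mult_pos_pos) auto
  then have "u * P < - (s * u) * (1 - u)"
    unfolding P_def by (simp add: algebra_simps)
  then have "u < - (s * u) * (1 - u) / P"
    using pos(1) by (subst pos_less_divide_eq)
  then have "u / (1 - u) < - (s * u) / P"
    using pos(2) by (subst pos_divide_less_eq) auto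
  moreover have "- u / (u - 1) = u / (1 - u)"
    using divide_minus_right[of u "u - 1"] by simp
  ultimately show ?thesis
    unfolding P_def by simp
qed

theorem lemma3p2:
  fixes xi :: "real \<times> real \<times> real \<times> real"
  assumes "xi \<in> Phi"
    and "lamLs xi + \<bar>lamRs xi\<bar> < 1"
  shows "snd (ptU xi) > snd (ptV xi)"
proof -
  obtain tL dL tR dR where xi: "xi = (tL, dL, tR, dR)"
    by (cases xi) auto
  define a s u where "a = lamLs xi" and "s = lamRs xi" and "u = lamRu xi"
  have a: "0 < a"
    using lamLs_Phi assms(1) unfolding xi a_def by blast
  have s: "is_eig tR dR s" "s < 0"
    using lamRs_Phi assms(1) unfolding xi s_def by blast+
  have u: "u = tR - s" "u < -1"
    using lamRu_Phi assms(1) unfolding xi s_def u_def by blast+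
  have "dR = s * (tR - s)"
    using is_eig_factor[OF s(1), of 0] by (simp add: algebra_simps)
  then have dR: "dR = s * u"
    using u(1) by simp
  have "snd (ptU xi) = - dR / ((1 - a) * (a - tR))"
    using snd_ptU assms(1) unfolding xi a_def by blast
  also have "\<dots> = - (s * u) / ((1 - a) * (a - s - u))"
    using dR u(1) by simp
  finally have "snd (ptU xi) = - (s * u) / ((1 - a) * (a - s - u))" .
  moreover have "snd (ptV xi) = - u / (u - 1)"
    unfolding ptV_def u_def by simp
  moreover have "a - s < 1"
    using assms(2) s(2) unfolding a_def s_def by simp
  ultimately show ?thesis
    using eigenvalue_intercept_less[of a s u] a s(2) u(2) by simp
qed

end
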